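(* Let $K\ge 3$, $\alpha\in[2:K-1]$, $F\in\mathbb{Z}^+$, and consider the symmetric $(K,\alpha,F)$ FDS structure with $N=F\binom{K}{\alpha}\ge K$. For $t\in[0:K]$ let $R_{\mathrm{MAN}}(t)=\frac{K-t}{t+1}$ denote the load of the Maddah-Ali–Niesen scheme at cache size $M=tN/K$, and write $R^\star_{\mathrm{u},\mathrm{s}}(t)$ for $R^\star_{\mathrm{u},\mathrm{s}}(tN/K)$. Then $$\frac{R^\star_{\mathrm{u},\mathrm{s}}(t)}{R_{\mathrm{MAN}}(t)}\ge 1\quad\text{for all } t\in[0:\alpha-1],\qquad \frac{R^\star_{\mathrm{u},\mathrm{s}}(t)}{R_{\mathrm{MAN}}(t)}> 1\quad\text{for all } t\in\{1,\dots,\alpha-2\}.$$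
   Context: Notation: $[n]=\{1,\dots,n\}$, $[a:b]=\{a,\dots,b\}$. Symmetric $(K,\alpha,F)$ FDS structure: the library consists of $N=F\binom{K}{\alpha}$ distinct files $W_{f,\mathcal S}$, indexed by $f\in[F]$ and $\mathcal S\subseteq[K]$ with $|\mathcal S|=\alpha$; the file class $\mathcal W_{\mathcal S}=\{W_{f,\mathcal S}:f\in[F]\}$ is of interest exactly to the users in $\mathcal S$. The file demand set (FDS) of user $k\in[K]$ is $\mathcal F_k=\{W_{f,\mathcal S}: f\in[F],\ |\mathcal S|=\alpha,\ k\in\mathcal S\}$. Caching model (centralized): a server stores the $N$ files, each consisting of $B$ independent uniformly random bits, and is connected to $K$ users by an error-free shared broadcast link; each user has a cache of $MB$ bits. In the placement phase the server fills the caches without knowing the future demands. In the delivery phase each user $k$ requests one file in $\mathcal F_k$; the server then broadcasts a message from which each user must decode its requested file using its cache contents. A pair $(M,R)$ is achievable if there is a scheme such that for every admissible demand at most $RB$ bits are transmitted; the optimal worst-case load is the infimum of achievable $R$. Uncoded and selfish placement: caches contain plain copies of bits of files, and user $k$ may cache bits of $W_{f,\mathcal S}$ only if $k\in\mathcal S$. $R^\star_{\mathrm{u},\mathrm{s}}(M)$ is the optimal worst-case load when the placement is restricted to be uncoded and selfish. *)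

theory Defs
  imports Complex_Main
begin

type_synonym fidx = "nat \<times> nat set"

definition lib :: "nat \<Rightarrow> nat \<Rightarrow> nat \<Rightarrow> fidx set" where
  "lib K \<alpha> F = {(f, S). f \<in> {1..F} \<and> S \<subseteq> {1..K} \<and> card S = \<alpha>}"

definition admissible_demand :: "nat \<Rightarrow> nat \<Rightarrow> nat \<Rightarrow> (nat \<Rightarrow> fidx) \<Rightarrow> bool" where
  "admissible_demand K \<alpha> F d \<longleftrightarrow> (\<forall>k\<in>{1..K}. d k \<in> lib K \<alpha> F \<and> k \<in> snd (d k))"

text \<open>Uncoded and selfish placement: user k stores plain bits (file, bit index) of files W_{f,S}
  with k in S only, at most M B bits.\<close>
definition us_placement :: "nat \<Rightarrow> nat \<Rightarrow> nat \<Rightarrow> nat \<Rightarrow> real \<Rightarrow> (nat \<Rightarrow> (fidx \<times> nat) set) \<Rightarrow> bool" where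
  "us_placement K \<alpha> F B M Z \<longleftrightarrow>
     (\<forall>k\<in>{1..K}. Z k \<subseteq> {(n, b). n \<in> lib K \<alpha> F \<and> k \<in> snd n \<and> b < B}
                 \<and> real (card (Z k)) \<le> M * real B)"

definition cache_content :: "(nat \<Rightarrow> (fidx \<times> nat) set) \<Rightarrow> nat \<Rightarrow> (fidx \<Rightarrow> nat \<Rightarrow> bool) \<Rightarrow> (fidx \<times> nat \<Rightarrow> bool)" where
  "cache_content Z k w = (\<lambda>(n, b). if (n, b) \<in> Z k then w n b else False)"

definition us_achievable :: "nat \<Rightarrow> nat \<Rightarrow> nat \<Rightarrow> real \<Rightarrow> real \<Rightarrow> bool" where
  "us_achievable K \<alpha> F M R \<longleftrightarrow>
     (\<exists>(B::nat) Z (enc :: (nat \<Rightarrow> fidx) \<Rightarrow> (fidx \<Rightarrow> nat \<Rightarrow> bool) \<Rightarrow> bool list)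
        (dec :: (nat \<Rightarrow> fidx) \<Rightarrow> nat \<Rightarrow> bool list \<Rightarrow> (fidx \<times> nat \<Rightarrow> bool) \<Rightarrow> nat \<Rightarrow> bool).
        B > 0 \<and> us_placement K \<alpha> F B M Z \<and>
        (\<forall>d. admissible_demand K \<alpha> F d \<longrightarrow>
           (\<forall>w. real (length (enc d w)) \<le> R * real B \<and>
                (\<forall>k\<in>{1..K}. \<forall>b<B. dec d k (enc d w) (cache_content Z k w) b = w (d k) b))))"

definition Rstar_us :: "nat \<Rightarrow> nat \<Rightarrow> nat \<Rightarrow> real \<Rightarrow> real" where
  "Rstar_us K \<alpha> F M = Inf {R. us_achievable K \<alpha> F M R}"

definition R_MAN :: "nat \<Rightarrow> nat \<Rightarrow> real" where
  "R_MAN K t = (real K - real t) / (real t + 1)"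

end

theory Submission
  imports Defs "HOL-Combinatorics.Permutations"
begin

text \<open>Fix an uncoded selfish placement and a delivery scheme with load \<open>R\<close>. For a permutation
  \<open>u\<close> of the users and a file index \<open>f\<close>, let user \<open>u i\<close> request a file of class \<open>u ` W\<^sub>i\<close>, where
  \<open>W\<^sub>i\<close> is the window of \<open>\<alpha>\<close> cyclically consecutive positions starting at \<open>i\<close>. Serving the users
  in the order \<open>u 1, \<dots>, u K\<close>, the broadcast determines every bit of the \<open>i\<close>-th requested file that
  none of \<open>u 1, \<dots>, u i\<close> caches (the acyclic index coding bound), so these bits number at most
  \<open>R B\<close>. Averaging over all \<open>u\<close> bounds the sum, over all bits, of a function \<open>g\<close> of the number
  \<open>l\<close> of users caching the bit, where \<open>g(l) = (K - \<alpha>)(\<alpha> - l)/\<alpha> + (\<alpha> - l)/(l + 1)\<close> is convex.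
  By selfishness only users of the class cache a bit, the cache sizes force the mean of \<open>l\<close> to be
  at most \<open>t\<close>, and Jensen's inequality gives \<open>R \<ge> g(t)\<close>, which exceeds the MAN load
  \<open>(K - t)/(t + 1)\<close> by \<open>(K - \<alpha>) t (\<alpha> - t - 1) / (\<alpha> (t + 1))\<close>.\<close>

section \<open>Averaging over permutations\<close>

definition subset_flags :: "'a set \<Rightarrow> nat \<Rightarrow> nat \<Rightarrow> ('a set \<times> 'a set) set" where
  "subset_flags A p q = {(S, V). S \<subseteq> A \<and> card S = p \<and> V \<subseteq> S \<and> card V = q}"

lemma finite_subset_flags: "finite A \<Longrightarrow> finite (subset_flags A p q)"
  unfolding subset_flags_def by (rule finite_subset[of _ "Pow A \<times> Pow A"]) auto

lemma card_subset_flags: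
  assumes "finite A"
  shows "card (subset_flags A p q) = (card A choose p) * (p choose q)"
proof -
  have "subset_flags A p q = (SIGMA S:{S. S \<subseteq> A \<and> card S = p}. {V. V \<subseteq> S \<and> card V = q})"
    unfolding subset_flags_def by auto
  also have "card \<dots> = (\<Sum>S | S \<subseteq> A \<and> card S = p. card {V. V \<subseteq> S \<and> card V = q})"
    using assms by (intro card_SigmaI) (auto intro: finite_subset[of _ "Pow A"] finite_subset[of _ "Pow _"])
  also have "\<dots> = (\<Sum>S | S \<subseteq> A \<and> card S = p. p choose q)"
    using assms by (intro sum.cong refl) (auto simp: n_subsets finite_subset)
  also have "\<dots> = (card A choose p) * (p choose q)"
    using assms by (simp add: n_subsets)
  finally show ?thesis .
qed

lemma exists_permutes_image_eq:
  assumes "finite A" "X \<subseteq> A" "Y \<subseteq> A" "card X = card Y"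
  obtains \<sigma> where "\<sigma> permutes A" "\<sigma> ` X = Y"
proof -
  have "finite X" "finite Y"
    using assms finite_subset by blast+
  then obtain g where g: "bij_betw g X Y"
    using assms(4) finite_same_card_bij by blast
  have "card (A - X) = card (A - Y)"
    using assms \<open>finite X\<close> \<open>finite Y\<close> by (simp add: card_Diff_subset)
  then obtain h where h: "bij_betw h (A - X) (A - Y)"
    using assms(1) finite_same_card_bij by blast
  define \<sigma> where "\<sigma> x = (if x \<in> X then g x else if x \<in> A then h x else x)" for x
  have "bij_betw \<sigma> X Y"
    using g by (rule bij_betw_cong[THEN iffD1, rotated]) (simp add: \<sigma>_def)
  moreover have "bij_betw \<sigma> (A - X) (A - Y)"
    using h by (rule bij_betw_cong[THEN iffD1, rotated]) (simp add: \<sigma>_def)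
  ultimately have "bij_betw \<sigma> (X \<union> (A - X)) (Y \<union> (A - Y))"
    by (rule bij_betw_combine) blast
  then have "bij_betw \<sigma> A A"
    using assms(2,3) by (simp add: Un_absorb1 Un_Diff_cancel)
  then have "\<sigma> permutes A"
    using assms(2) by (intro bij_imp_permutes) (auto simp: \<sigma>_def)
  moreover have "\<sigma> ` X = Y"
    using \<open>bij_betw \<sigma> X Y\<close> by (simp add: bij_betw_def)
  ultimately show thesis
    by (rule that)
qed

lemma exists_permutes_image_flag:
  assumes "finite A" "Q \<subseteq> P" "P \<subseteq> A" "(S, V) \<in> subset_flags A (card P) (card Q)"
  obtains \<sigma> where "\<sigma> permutes A" "\<sigma> ` P = S" "\<sigma> ` Q = V"
proof -
  have S: "S \<subseteq> A" "card P = card S" and V: "V \<subseteq> S" "card Q = card V"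
    using assms(4) by (auto simp: subset_flags_def)
  obtain \<sigma>\<^sub>1 where \<sigma>\<^sub>1: "\<sigma>\<^sub>1 permutes A" "\<sigma>\<^sub>1 ` P = S"
    using exists_permutes_image_eq[OF assms(1,3) S] .
  have "card (\<sigma>\<^sub>1 ` Q) = card V"
    using V(2) card_image[OF inj_on_subset[OF permutes_inj[OF \<sigma>\<^sub>1(1)] subset_UNIV]] by simp
  moreover have "\<sigma>\<^sub>1 ` Q \<subseteq> S" "finite S"
    using \<sigma>\<^sub>1 assms(1,2) S(1) finite_subset by blast+
  ultimately obtain \<sigma>\<^sub>2 where \<sigma>\<^sub>2: "\<sigma>\<^sub>2 permutes S" "\<sigma>\<^sub>2 ` \<sigma>\<^sub>1 ` Q = V"
    using exists_permutes_image_eq[of S "\<sigma>\<^sub>1 ` Q" V] V(1) by blast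
  show thesis
  proof
    show "\<sigma>\<^sub>2 \<circ> \<sigma>\<^sub>1 permutes A"
      using permutes_compose[OF \<sigma>\<^sub>1(1) permutes_subset[OF \<sigma>\<^sub>2(1) S(1)]] .
    show "(\<sigma>\<^sub>2 \<circ> \<sigma>\<^sub>1) ` P = S" "(\<sigma>\<^sub>2 \<circ> \<sigma>\<^sub>1) ` Q = V"
      using \<sigma>\<^sub>1(2) \<sigma>\<^sub>2 permutes_image[OF \<sigma>\<^sub>2(1)] by (metis image_comp)+
  qed
qed

lemma card_permutes_flag_fiber:
  assumes "finite A" "Q \<subseteq> P" "P \<subseteq> A" "(S, V) \<in> subset_flags A (card P) (card Q)"
  shows "card {u. u permutes A \<and> u ` P = S \<and> u ` Q = V} = card {u. u permutes A \<and> u ` P = P \<and> u ` Q = Q}"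
proof -
  obtain \<sigma> where \<sigma>: "\<sigma> permutes A" "\<sigma> ` P = S" "\<sigma> ` Q = V"
    using exists_permutes_image_flag[OF assms] .
  have \<sigma>_inv: "inv \<sigma> permutes A" "inv \<sigma> ` S = P" "inv \<sigma> ` V = Q"
    using permutes_inv[OF \<sigma>(1)] permutes_inj[OF \<sigma>(1)]
    by (simp_all add: \<sigma>(2,3)[symmetric] image_inv_f_f)
  have compose: "\<tau> \<circ> u \<in> {u. u permutes A \<and> u ` P = \<tau> ` P' \<and> u ` Q = \<tau> ` Q'}"
    if "\<tau> permutes A" "u \<in> {u. u permutes A \<and> u ` P = P' \<and> u ` Q = Q'}" for \<tau> u P' Q'
    using that permutes_compose[of u A \<tau>] by (simp only: mem_Collect_eq image_comp[symmetric])
  have "bij_betw ((\<circ>) \<sigma>) {u. u permutes A \<and> u ` P = P \<and> u ` Q = Q} {u. u permutes A \<and> u ` P = S \<and> u ` Q = V}"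
  proof (rule bij_betw_byWitness[where f' = "(\<circ>) (inv \<sigma>)"])
    show "\<forall>u\<in>{u. u permutes A \<and> u ` P = P \<and> u ` Q = Q}. inv \<sigma> \<circ> (\<sigma> \<circ> u) = u"
      "\<forall>u\<in>{u. u permutes A \<and> u ` P = S \<and> u ` Q = V}. \<sigma> \<circ> (inv \<sigma> \<circ> u) = u"
      using permutes_inv_o[OF \<sigma>(1)] by (simp_all add: o_assoc)
    show "(\<circ>) \<sigma> ` {u. u permutes A \<and> u ` P = P \<and> u ` Q = Q} \<subseteq> {u. u permutes A \<and> u ` P = S \<and> u ` Q = V}"
      using compose[OF \<sigma>(1), of _ P Q] unfolding \<sigma>(2,3) by (rule image_subsetI)
    show "(\<circ>) (inv \<sigma>) ` {u. u permutes A \<and> u ` P = S \<and> u ` Q = V} \<subseteq> {u. u permutes A \<and> u ` P = P \<and> u ` Q = Q}"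
      using compose[OF \<sigma>_inv(1), of _ S V] unfolding \<sigma>_inv(2,3) by (rule image_subsetI)
  qed
  then show ?thesis
    by (rule bij_betw_same_card[symmetric])
qed

lemma sum_permutes_image_flag:
  fixes \<phi> :: "'a set \<Rightarrow> 'a set \<Rightarrow> real"
  assumes "finite A" "Q \<subseteq> P" "P \<subseteq> A"
  shows "(\<Sum>u | u permutes A. \<phi> (u ` P) (u ` Q))
       = real (card {u. u permutes A \<and> u ` P = P \<and> u ` Q = Q}) * (\<Sum>(S, V)\<in>subset_flags A (card P) (card Q). \<phi> S V)"
proof -
  let ?flags = "subset_flags A (card P) (card Q)"
  have "(\<lambda>u. (u ` P, u ` Q)) ` {u. u permutes A} \<subseteq> ?flags"
  proof (intro image_subsetI)
    fix u assume "u \<in> {u. u permutes A}"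
    then have "u permutes A" by simp
    moreover have "inj_on u X" for X
      using permutes_inj[OF \<open>u permutes A\<close>] by (rule inj_on_subset) simp
    ultimately show "(u ` P, u ` Q) \<in> ?flags"
      using assms(2,3) permutes_image[of u A]
      by (auto simp: subset_flags_def card_image dest: permutes_in_image[THEN iffD2])
  qed
  then have "(\<Sum>u | u permutes A. \<phi> (u ` P) (u ` Q))
      = (\<Sum>F\<in>?flags. \<Sum>u | u \<in> {u. u permutes A} \<and> (u ` P, u ` Q) = F. \<phi> (u ` P) (u ` Q))"
    using assms(1) by (intro sum.group[symmetric] finite_permutations finite_subset_flags)
  also have "\<dots> = (\<Sum>F\<in>?flags. real (card {u. u permutes A \<and> (u ` P, u ` Q) = F}) * \<phi> (fst F) (snd F))"
    by (intro sum.cong refl) (auto intro: sum.cong)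
  also have "\<dots> = (\<Sum>F\<in>?flags. real (card {u. u permutes A \<and> u ` P = P \<and> u ` Q = Q}) * \<phi> (fst F) (snd F))"
    using card_permutes_flag_fiber[OF assms] by (intro sum.cong refl) auto
  finally show ?thesis
    by (simp add: sum_distrib_left case_prod_unfold)
qed

lemma sum_permutes_image_flag_average:
  fixes \<phi> :: "'a set \<Rightarrow> 'a set \<Rightarrow> real"
  assumes "finite A" "Q \<subseteq> P" "P \<subseteq> A"
  shows "real ((card A choose card P) * (card P choose card Q)) * (\<Sum>u | u permutes A. \<phi> (u ` P) (u ` Q))
       = fact (card A) * (\<Sum>(S, V)\<in>subset_flags A (card P) (card Q). \<phi> S V)"
proof -
  let ?stab = "real (card {u. u permutes A \<and> u ` P = P \<and> u ` Q = Q})"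
  have "fact (card A) = ?stab * real ((card A choose card P) * (card P choose card Q))"
    using sum_permutes_image_flag[OF assms, of "\<lambda>_ _. 1"] assms(1)
    by (simp add: card_permutations card_subset_flags)
  then show ?thesis
    using sum_permutes_image_flag[OF assms, of \<phi>] by simp
qed

lemma sum_subset_flags_avoiding:
  fixes T :: "'a set \<Rightarrow> nat \<Rightarrow> 'a set"
  assumes "finite A" and T: "\<And>S b. T S b \<subseteq> S"
  shows "(\<Sum>(S, V)\<in>subset_flags A p q. real (card {b. b < B \<and> T S b \<inter> V = {}}))
       = (\<Sum>S | S \<subseteq> A \<and> card S = p. \<Sum>b<B. real ((p - card (T S b)) choose q))"
proof -
  have "subset_flags A p q = (SIGMA S:{S. S \<subseteq> A \<and> card S = p}. {V. V \<subseteq> S \<and> card V = q})"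
    unfolding subset_flags_def by auto
  then have "(\<Sum>(S, V)\<in>subset_flags A p q. real (card {b. b < B \<and> T S b \<inter> V = {}}))
      = (\<Sum>S | S \<subseteq> A \<and> card S = p. \<Sum>V | V \<subseteq> S \<and> card V = q. real (card {b. b < B \<and> T S b \<inter> V = {}}))"
    using assms(1) by (auto intro!: sum.Sigma[symmetric] intro: finite_subset[of _ "Pow A"] finite_subset[of _ "Pow _"])
  also have "\<dots> = (\<Sum>S | S \<subseteq> A \<and> card S = p. \<Sum>V | V \<subseteq> S \<and> card V = q. \<Sum>b<B. of_bool (T S b \<inter> V = {}))"
  proof -
    have "{b. b < B \<and> P b} = {..<B} \<inter> {b. P b}" for P
      by auto
    then show ?thesis
      by simp
  qed
  also have "\<dots> = (\<Sum>S | S \<subseteq> A \<and> card S = p. \<Sum>b<B. real ((p - card (T S b)) choose q))"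
  proof (intro sum.cong refl, unfold mem_Collect_eq, elim conjE)
    fix S
    assume "S \<subseteq> A" "card S = p"
    then have "finite S"
      using assms(1) finite_subset by blast
    have "card ({V. V \<subseteq> S \<and> card V = q} \<inter> {V. T S b \<inter> V = {}}) = (p - card (T S b)) choose q" for b
    proof -
      have "{V. V \<subseteq> S \<and> card V = q} \<inter> {V. T S b \<inter> V = {}} = {V. V \<subseteq> S - T S b \<and> card V = q}"
        by auto
      then show ?thesis
        using \<open>finite S\<close> \<open>card S = p\<close> T[of S b] by (simp add: n_subsets card_Diff_subset finite_subset)
    qed
    moreover have "finite {V. V \<subseteq> S \<and> card V = q}"
      using \<open>finite S\<close> by (simp add: finite_subset[of _ "Pow S"])
    ultimately show "(\<Sum>V | V \<subseteq> S \<and> card V = q. \<Sum>b<B. of_bool (T S b \<inter> V = {}))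
        = (\<Sum>b<B. real ((p - card (T S b)) choose q))"
      by (subst sum.swap) simp
  qed
  finally show ?thesis .
qed

lemma sum_permutes_avoiding:
  fixes T :: "'a set \<Rightarrow> nat \<Rightarrow> 'a set"
  assumes "finite A" "Q \<subseteq> P" "P \<subseteq> A" and "\<And>S b. T S b \<subseteq> S"
  shows "real (card A choose card P) * (\<Sum>u | u permutes A. real (card {b. b < B \<and> T (u ` P) b \<inter> u ` Q = {}}))
       = fact (card A) * (\<Sum>S | S \<subseteq> A \<and> card S = card P.
           \<Sum>b<B. real ((card P - card (T S b)) choose card Q) / real (card P choose card Q))"
proof -
  have "card Q \<le> card P"
    using assms(1-3) by (meson card_mono finite_subset)
  then have "real (card P choose card Q) > 0"
    by simp
  moreover have "real (card P choose card Q) * (real (card A choose card P) *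
      (\<Sum>u | u permutes A. real (card {b. b < B \<and> T (u ` P) b \<inter> u ` Q = {}})))
    = real (card P choose card Q) * (fact (card A) * (\<Sum>S | S \<subseteq> A \<and> card S = card P.
           \<Sum>b<B. real ((card P - card (T S b)) choose card Q) / real (card P choose card Q)))"
    using sum_permutes_image_flag_average[OF assms(1-3), of "\<lambda>S V. real (card {b. b < B \<and> T S b \<inter> V = {}})"]
      sum_subset_flags_avoiding[OF assms(1,4), where p = "card P" and q = "card Q" and B = B] \<open>real (card P choose card Q) > 0\<close>
    by (simp add: sum_divide_distrib[symmetric] ac_simps)
  ultimately show ?thesis
    by simp
qed

section \<open>Binomial sums and tangent lines\<close>

lemma choose_mult_diff_choose_swap:
  assumes "r \<le> n" "l \<le> n"
  shows "((n - l) choose r) * (n choose l) = ((n - r) choose l) * (n choose r)"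
proof (cases "r + l \<le> n")
  case True
  have "(n choose (r + l)) * ((r + l) choose r) = (n choose r) * ((n - r) choose l)"
    using choose_mult[of r "r + l" n] True by simp
  moreover have "(n choose (r + l)) * ((r + l) choose l) = (n choose l) * ((n - l) choose r)"
    using choose_mult[of l "r + l" n] True by simp
  moreover have "(r + l) choose r = (r + l) choose l"
    using binomial_symmetric[of r "r + l"] by simp
  ultimately show ?thesis
    by (simp add: mult.commute)
next
  case False
  then have "n - l < r" "n - r < l"
    using assms by auto
  then show ?thesis
    by (simp add: binomial_eq_0)
qed

lemma sum_diff_choose: "(\<Sum>r=1..n. (n - r) choose l) = n choose Suc l"
proof (cases n)
  case (Suc m)
  have "(\<Sum>r=1..n. (n - r) choose l) = (\<Sum>i<n. (n - Suc i) choose l)"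
    by (simp add: sum.atLeast1_atMost_eq)
  also have "\<dots> = (\<Sum>i\<le>m. i choose l)"
    using sum.nat_diff_reindex[of "\<lambda>i. i choose l" n] by (simp add: Suc lessThan_Suc_atMost)
  also have "\<dots> = n choose Suc l"
    using sum_choose_upper[of l m] by (simp add: Suc)
  finally show ?thesis .
qed simp

lemma sum_choose_ratio:
  assumes "l \<le> n"
  shows "(\<Sum>r=1..n. real ((n - l) choose r) / real (n choose r)) = (real n - real l) / (real l + 1)"
proof -
  have pos: "real (n choose l) > 0"
    using assms by simp
  have "(\<Sum>r=1..n. real ((n - l) choose r) / real (n choose r))
      = (\<Sum>r=1..n. real ((n - r) choose l) / real (n choose l))"
  proof (intro sum.cong refl)
    fix r
    assume r: "r \<in> {1..n}"
    have "real ((n - l) choose r) * real (n choose l) = real ((n - r) choose l) * real (n choose r)"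
      using choose_mult_diff_choose_swap[of r n l] r assms by (simp flip: of_nat_mult)
    then show "real ((n - l) choose r) / real (n choose r) = real ((n - r) choose l) / real (n choose l)"
      using pos r by (simp add: field_simps)
  qed
  also have "\<dots> = real (\<Sum>r=1..n. (n - r) choose l) / real (n choose l)"
    by (simp only: of_nat_sum sum_divide_distrib)
  also have "\<dots> = real (n choose Suc l) / real (n choose l)"
    by (simp only: sum_diff_choose)
  also have "\<dots> = (real n - real l) / (real l + 1)"
  proof -
    have "Suc l * (n choose Suc l) = (n - l) * (n choose l)"
      by (simp only: binomial_absorption binomial_absorb_comp)
    then have "real (Suc l * (n choose Suc l)) = real ((n - l) * (n choose l))"
      by (rule arg_cong)
    then have "(real l + 1) * real (n choose Suc l) = (real n - real l) * real (n choose l)"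
      using assms by (simp add: of_nat_diff algebra_simps)
    then show ?thesis
      using pos by (simp add: field_simps)
  qed
  finally show ?thesis .
qed

lemma diff_div_ge_tangent:
  fixes a x y :: real
  assumes "0 \<le> a" "0 < x" "0 < y"
  shows "(a - y) / y - a / y\<^sup>2 * (x - y) \<le> (a - x) / x"
proof -
  have "(a - x) / x - ((a - y) / y - a / y\<^sup>2 * (x - y)) = a * (x - y)\<^sup>2 / (x * y\<^sup>2)"
    using assms by (simp add: field_simps power2_eq_square)
  moreover have "a * (x - y)\<^sup>2 / (x * y\<^sup>2) \<ge> 0"
    using assms by simp
  ultimately show ?thesis
    by linarith
qed

lemma card_mult_le_sum_of_tangent:
  fixes \<phi> :: "real \<Rightarrow> real" and x :: "'a \<Rightarrow> real"
  assumes "finite I" and tangent: "\<And>i. i \<in> I \<Longrightarrow> \<phi> t - s * (x i - t) \<le> \<phi> (x i)"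
    and "0 \<le> s" and mean: "(\<Sum>i\<in>I. x i) \<le> real (card I) * t"
  shows "real (card I) * \<phi> t \<le> (\<Sum>i\<in>I. \<phi> (x i))"
proof -
  have "real (card I) * \<phi> t \<le> real (card I) * \<phi> t - s * ((\<Sum>i\<in>I. x i) - real (card I) * t)"
    using \<open>0 \<le> s\<close> mean by (simp add: mult_nonneg_nonpos)
  also have "\<dots> = (\<Sum>i\<in>I. \<phi> t - s * (x i - t))"
    by (simp add: sum.distrib sum_distrib_left sum_subtractf algebra_simps)
  also have "\<dots> \<le> (\<Sum>i\<in>I. \<phi> (x i))"
    by (rule sum_mono) (rule tangent)
  finally show ?thesis .
qed

section \<open>Delivery schemes and the acyclic index coding bound\<close>

definition delivers ::
  "nat \<Rightarrow> nat \<Rightarrow> nat \<Rightarrow> nat \<Rightarrow> real \<Rightarrow> (nat \<Rightarrow> (fidx \<times> nat) set)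
   \<Rightarrow> ((nat \<Rightarrow> fidx) \<Rightarrow> (fidx \<Rightarrow> nat \<Rightarrow> bool) \<Rightarrow> bool list)
   \<Rightarrow> ((nat \<Rightarrow> fidx) \<Rightarrow> nat \<Rightarrow> bool list \<Rightarrow> (fidx \<times> nat \<Rightarrow> bool) \<Rightarrow> nat \<Rightarrow> bool) \<Rightarrow> bool" where
  "delivers K \<alpha> F B R Z enc dec \<longleftrightarrow>
     (\<forall>d. admissible_demand K \<alpha> F d \<longrightarrow>
        (\<forall>w. real (length (enc d w)) \<le> R * real B \<and>
             (\<forall>k\<in>{1..K}. \<forall>b<B. dec d k (enc d w) (cache_content Z k w) b = w (d k) b)))"

lemma us_achievable_iff_delivers:
  "us_achievable K \<alpha> F M R \<longleftrightarrow>
     (\<exists>B Z enc dec. B > 0 \<and> us_placement K \<alpha> F B M Z \<and> delivers K \<alpha> F B R Z enc dec)"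
  unfolding us_achievable_def delivers_def ..

definition cachers :: "(nat \<Rightarrow> (fidx \<times> nat) set) \<Rightarrow> nat \<Rightarrow> fidx \<Rightarrow> nat \<Rightarrow> nat set" where
  "cachers Z K n b = {k \<in> {1..K}. (n, b) \<in> Z k}"

lemma cachers_subset:
  assumes "us_placement K \<alpha> F B M Z"
  shows "cachers Z K n b \<subseteq> snd n"
  using assms by (auto simp: cachers_def us_placement_def)

lemma card_cachers_le:
  assumes "us_placement K \<alpha> F B M Z" and "n \<in> lib K \<alpha> F"
  shows "card (cachers Z K n b) \<le> \<alpha>"
proof -
  have "finite (snd n)" "card (snd n) = \<alpha>"
    using assms(2) by (auto simp: lib_def dest: rev_finite_subset[OF finite_atLeastAtMost])
  moreover have "card (cachers Z K n b) \<le> card (snd n)"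
    by (rule card_mono[OF \<open>finite (snd n)\<close> cachers_subset[OF assms(1)]])
  ultimately show ?thesis
    by simp
qed

lemma lib_eq_Times: "lib K \<alpha> F = {1..F} \<times> {S. S \<subseteq> {1..K} \<and> card S = \<alpha>}"
  unfolding lib_def by auto

lemma finite_lib: "finite (lib K \<alpha> F)"
  by (simp add: lib_eq_Times finite_subset[of _ "Pow {1..K}"])

lemma card_lib: "card (lib K \<alpha> F) = F * (K choose \<alpha>)"
  by (simp add: lib_eq_Times card_cartesian_product n_subsets)

lemma sum_card_cachers_le:
  assumes "us_placement K \<alpha> F B M Z"
  shows "(\<Sum>x\<in>lib K \<alpha> F \<times> {..<B}. real (card (cachers Z K (fst x) (snd x)))) \<le> real K * M * real B"
proof -
  have "(\<Sum>x\<in>lib K \<alpha> F \<times> {..<B}. real (card (cachers Z K (fst x) (snd x))))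
      = (\<Sum>x\<in>lib K \<alpha> F \<times> {..<B}. \<Sum>k=1..K. of_bool (x \<in> Z k))"
    by (intro sum.cong refl) (auto simp: cachers_def Int_def)
  also have "\<dots> = (\<Sum>k=1..K. \<Sum>x\<in>lib K \<alpha> F \<times> {..<B}. of_bool (x \<in> Z k))"
    by (rule sum.swap)
  also have "\<dots> = (\<Sum>k=1..K. real (card (Z k)))"
  proof (intro sum.cong refl)
    fix k
    assume "k \<in> {1..K}"
    then have "Z k \<subseteq> lib K \<alpha> F \<times> {..<B}"
      using assms by (auto simp: us_placement_def)
    then show "(\<Sum>x\<in>lib K \<alpha> F \<times> {..<B}. of_bool (x \<in> Z k)) = real (card (Z k))"
      by (simp add: finite_lib Int_absorb1)
  qed
  also have "\<dots> \<le> (\<Sum>k=1..K. M * real B)"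
    using assms by (intro sum_mono) (simp add: us_placement_def)
  finally show ?thesis
    by simp
qed

lemma us_achievable_unicast:
  assumes "0 \<le> M"
  shows "us_achievable K \<alpha> F M (real K)"
proof -
  define enc :: "(nat \<Rightarrow> fidx) \<Rightarrow> (fidx \<Rightarrow> nat \<Rightarrow> bool) \<Rightarrow> bool list"
    where "enc d w = map (\<lambda>k. w (d k) 0) [1..<K + 1]" for d w
  define dec :: "(nat \<Rightarrow> fidx) \<Rightarrow> nat \<Rightarrow> bool list \<Rightarrow> (fidx \<times> nat \<Rightarrow> bool) \<Rightarrow> nat \<Rightarrow> bool"
    where "dec d k m c b = m ! (k - 1)" for d k m c b
  have "us_placement K \<alpha> F 1 M (\<lambda>k. {})"
    using assms by (simp add: us_placement_def)
  moreover have "delivers K \<alpha> F 1 (real K) (\<lambda>k. {}) enc dec"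
    unfolding delivers_def enc_def dec_def by (auto simp del: upt_Suc simp add: nth_upt)
  ultimately show ?thesis
    unfolding us_achievable_iff_delivers by blast
qed

lemma card_le_if_inj_on_Pow_lists:
  fixes E :: "'a set \<Rightarrow> bool list"
  assumes "finite D" and "inj_on E (Pow D)" and "\<And>X. X \<subseteq> D \<Longrightarrow> length (E X) \<le> m"
  shows "card D \<le> m"
proof -
  have "E ` Pow D \<subseteq> {xs. set xs \<subseteq> UNIV \<and> length xs \<le> m}"
    using assms(3) by auto
  then have "card (E ` Pow D) \<le> card {xs. set xs \<subseteq> (UNIV :: bool set) \<and> length xs \<le> m}"
    by (intro card_mono finite_lists_length_le) auto
  also have "\<dots> = (\<Sum>i\<le>m. 2 ^ i)"
    using card_lists_length_le[of "UNIV :: bool set" m] by simp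
  also have "\<dots> < 2 ^ Suc m"
    by (induction m) auto
  finally have "(2::nat) ^ card D < 2 ^ Suc m"
    using assms(1,2) by (simp add: card_image card_Pow)
  then show ?thesis
    using power_less_imp_less_exp[of "2::nat" "card D" "Suc m"] by simp
qed

lemma decoding_agrees_on_uncached_bits:
  fixes E :: "(fidx \<Rightarrow> nat \<Rightarrow> bool) \<Rightarrow> bool list"
    and dec :: "nat \<Rightarrow> bool list \<Rightarrow> (fidx \<times> nat \<Rightarrow> bool) \<Rightarrow> nat \<Rightarrow> bool"
    and v :: "nat \<Rightarrow> nat"
  assumes decodes: "\<And>w k b. k \<in> {1..K} \<Longrightarrow> b < B \<Longrightarrow> dec k (E w) (cache_content Z k w) b = w (d k) b"
    and users: "v ` {1..n} \<subseteq> {1..K}"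
    and uncached: "\<And>p b. (p, b) \<in> D \<Longrightarrow>
      \<exists>i\<in>{1..n}. p = d (v i) \<and> b < B \<and> (\<forall>j\<in>{1..i}. (p, b) \<notin> Z (v j))"
    and "X \<subseteq> D" "Y \<subseteq> D" and same: "E (\<lambda>p b. (p, b) \<in> X) = E (\<lambda>p b. (p, b) \<in> Y)"
    and "i \<in> {1..n}"
  shows "\<forall>b<B. (d (v i), b) \<in> X \<longleftrightarrow> (d (v i), b) \<in> Y"
  using \<open>i \<in> {1..n}\<close>
proof (induction i rule: less_induct)
  case (less i)
  txt \<open>A bit of \<open>D\<close> cached by user \<open>v i\<close> belongs to a file \<open>d (v i')\<close> with \<open>i' < i\<close>.\<close>
  have agree: "(p, b) \<in> X \<longleftrightarrow> (p, b) \<in> Y" if cached: "(p, b) \<in> Z (v i)" for p b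
  proof (cases "(p, b) \<in> D")
    case True
    then obtain i' where i': "i' \<in> {1..n}" "p = d (v i')" "b < B"
      and "\<forall>j\<in>{1..i'}. (p, b) \<notin> Z (v j)"
      using uncached by blast
    with cached less.prems have "i' < i"
      by (metis atLeastAtMost_iff not_le_imp_less)
    then show ?thesis
      using less.IH i' by blast
  next
    case False
    then show ?thesis
      using \<open>X \<subseteq> D\<close> \<open>Y \<subseteq> D\<close> by blast
  qed
  have "cache_content Z (v i) (\<lambda>p b. (p, b) \<in> X) = cache_content Z (v i) (\<lambda>p b. (p, b) \<in> Y)"
    unfolding cache_content_def by (rule ext) (auto dest: agree)
  moreover have "v i \<in> {1..K}"
    using users less.prems by blast
  ultimately show ?case
    using decodes[of "v i" _ "\<lambda>p b. (p, b) \<in> X"] decodes[of "v i" _ "\<lambda>p b. (p, b) \<in> Y"] same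
    by simp
qed

lemma decoding_determines_uncached_bits:
  fixes E :: "(fidx \<Rightarrow> nat \<Rightarrow> bool) \<Rightarrow> bool list"
    and dec :: "nat \<Rightarrow> bool list \<Rightarrow> (fidx \<times> nat \<Rightarrow> bool) \<Rightarrow> nat \<Rightarrow> bool"
    and v :: "nat \<Rightarrow> nat"
  assumes decodes: "\<And>w k b. k \<in> {1..K} \<Longrightarrow> b < B \<Longrightarrow> dec k (E w) (cache_content Z k w) b = w (d k) b"
    and users: "v ` {1..n} \<subseteq> {1..K}"
    and uncached: "\<And>p b. (p, b) \<in> D \<Longrightarrow>
      \<exists>i\<in>{1..n}. p = d (v i) \<and> b < B \<and> (\<forall>j\<in>{1..i}. (p, b) \<notin> Z (v j))"
  shows "inj_on (\<lambda>X. E (\<lambda>p b. (p, b) \<in> X)) (Pow D)"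
proof (rule inj_onI)
  fix X Y
  assume X: "X \<in> Pow D" and Y: "Y \<in> Pow D"
    and same: "E (\<lambda>p b. (p, b) \<in> X) = E (\<lambda>p b. (p, b) \<in> Y)"
  have agree: "(p, b) \<in> X \<longleftrightarrow> (p, b) \<in> Y" if "(p, b) \<in> D" for p b
    using uncached[OF that] decoding_agrees_on_uncached_bits[OF decodes users uncached PowD[OF X] PowD[OF Y] same]
    by auto
  show "X = Y"
  proof (rule set_eqI)
    fix x
    show "x \<in> X \<longleftrightarrow> x \<in> Y"
      using X Y agree[of "fst x" "snd x"] by (cases "x \<in> D") auto
  qed
qed

lemma decoding_chain_bound:
  fixes E :: "(fidx \<Rightarrow> nat \<Rightarrow> bool) \<Rightarrow> bool list"
    and dec :: "nat \<Rightarrow> bool list \<Rightarrow> (fidx \<times> nat \<Rightarrow> bool) \<Rightarrow> nat \<Rightarrow> bool"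
    and v :: "nat \<Rightarrow> nat"
  assumes len: "\<And>w. real (length (E w)) \<le> L"
    and decodes: "\<And>w k b. k \<in> {1..K} \<Longrightarrow> b < B \<Longrightarrow> dec k (E w) (cache_content Z k w) b = w (d k) b"
    and users: "v ` {1..n} \<subseteq> {1..K}"
    and distinct: "inj_on (d \<circ> v) {1..n}"
  shows "(\<Sum>i=1..n. real (card {b. b < B \<and> (\<forall>j\<in>{1..i}. (d (v i), b) \<notin> Z (v j))})) \<le> L"
proof -
  define U where "U i = {b. b < B \<and> (\<forall>j\<in>{1..i}. (d (v i), b) \<notin> Z (v j))}" for i
  define D where "D = (\<Union>i\<in>{1..n}. Pair (d (v i)) ` U i)"
  have fin_U: "finite (U i)" for i
    unfolding U_def by simp
  have "finite D"
    unfolding D_def using fin_U by simp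
  have "card D = (\<Sum>i=1..n. card (Pair (d (v i)) ` U i))"
    unfolding D_def
  proof (rule card_UN_disjoint)
    show "\<forall>i\<in>{1..n}. \<forall>j\<in>{1..n}. i \<noteq> j \<longrightarrow> Pair (d (v i)) ` U i \<inter> Pair (d (v j)) ` U j = {}"
      using inj_onD[OF distinct] by fastforce
  qed (simp_all add: fin_U)
  also have "\<dots> = (\<Sum>i=1..n. card (U i))"
    by (intro sum.cong refl card_image) (simp add: inj_on_def)
  finally have card_D: "card D = (\<Sum>i=1..n. card (U i))" .
  have "inj_on (\<lambda>X. E (\<lambda>p b. (p, b) \<in> X)) (Pow D)"
    by (rule decoding_determines_uncached_bits[OF decodes users]) (auto simp: D_def U_def)
  then have "card D \<le> nat \<lfloor>L\<rfloor>"
    by (rule card_le_if_inj_on_Pow_lists[OF \<open>finite D\<close>]) (simp add: le_nat_floor len)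
  moreover have "real (nat \<lfloor>L\<rfloor>) \<le> L"
    using len[of undefined] by (simp add: of_nat_floor)
  ultimately have "real (card D) \<le> L"
    by linarith
  then show ?thesis
    by (simp add: card_D U_def)
qed

section \<open>Cyclic windows of users\<close>

text \<open>The positions \<open>i, i + 1, \<dots>, i + \<alpha> - 1\<close>, counted cyclically modulo \<open>K\<close>.\<close>
definition window :: "nat \<Rightarrow> nat \<Rightarrow> nat \<Rightarrow> nat set" where
  "window K \<alpha> i = (if i \<le> K - \<alpha> then {i..i + \<alpha> - 1} else {1..i - (K - \<alpha> + 1)} \<union> {i..K})"

locale windows =
  fixes K \<alpha> :: nat
  assumes alpha_pos: "1 \<le> \<alpha>" and alpha_less: "\<alpha> < K"
begin

lemma mem_window: "i \<in> {1..K} \<Longrightarrow> i \<in> window K \<alpha> i"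
  using alpha_pos by (auto simp: window_def)

lemma window_subset: "i \<in> {1..K} \<Longrightarrow> window K \<alpha> i \<subseteq> {1..K}"
  using alpha_pos alpha_less by (auto simp: window_def)

lemma card_window:
  assumes "i \<in> {1..K}"
  shows "card (window K \<alpha> i) = \<alpha>"
proof (cases "i \<le> K - \<alpha>")
  case True
  then show ?thesis
    using alpha_pos by (simp add: window_def)
next
  case False
  then have "window K \<alpha> i = {1..i - (K - \<alpha> + 1)} \<union> {i..K}"
    by (simp add: window_def)
  then have "card (window K \<alpha> i) = (i - (K - \<alpha> + 1)) + (K + 1 - i)"
    using False by (simp add: card_Un_disjoint)
  then show ?thesis
    using False alpha_less assms by simp
qed

lemma card_window_prefix:
  assumes "i \<in> {1..K}"
  shows "card (window K \<alpha> i \<inter> {1..i}) = (if i \<le> K - \<alpha> then 1 else i - (K - \<alpha>))"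
proof (cases "i \<le> K - \<alpha>")
  case True
  then have "window K \<alpha> i \<inter> {1..i} = {i}"
    using alpha_pos assms by (auto simp: window_def)
  then show ?thesis
    using True by simp
next
  case False
  then have "window K \<alpha> i \<inter> {1..i} = {1..i - (K - \<alpha> + 1)} \<union> {i}"
    using alpha_pos alpha_less assms by (auto simp: window_def)
  then show ?thesis
    using False alpha_less assms by (simp add: card_Un_disjoint)
qed

lemma last_mem_window_iff: "i \<in> {1..K} \<Longrightarrow> K \<in> window K \<alpha> i \<longleftrightarrow> K - \<alpha> < i"
  using alpha_pos alpha_less by (auto simp: window_def)

lemma Min_window: "1 \<le> i \<Longrightarrow> i \<le> K - \<alpha> \<Longrightarrow> Min (window K \<alpha> i) = i"
  unfolding window_def using alpha_pos by (auto intro: Min_eqI)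

lemma window_wraps_around:
  assumes "K - \<alpha> < i" "i \<le> K"
  shows "i - 1 \<notin> window K \<alpha> i" and "{i..K} \<subseteq> window K \<alpha> i"
  using assms alpha_less by (auto simp: window_def)

lemma inj_on_window: "inj_on (window K \<alpha>) {1..K}"
proof (rule inj_onI)
  fix i j
  assume i: "i \<in> {1..K}" and j: "j \<in> {1..K}" and same: "window K \<alpha> i = window K \<alpha> j"
  then have "i \<le> K - \<alpha> \<longleftrightarrow> j \<le> K - \<alpha>"
    using last_mem_window_iff by (metis not_le)
  show "i = j"
  proof (cases "i \<le> K - \<alpha>")
    case True
    then show ?thesis
      using Min_window i j same \<open>i \<le> K - \<alpha> \<longleftrightarrow> j \<le> K - \<alpha>\<close> by (metis atLeastAtMost_iff)
  next
    case False
    have "\<not> i < j" if "window K \<alpha> i = window K \<alpha> j" "K - \<alpha> < i" "K - \<alpha> < j" "j \<le> K" for i j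
    proof
      assume "i < j"
      then have "j - 1 \<in> {i..K}"
        using that(4) by auto
      then have "j - 1 \<in> window K \<alpha> i"
        using that(2,4) \<open>i < j\<close> window_wraps_around(2)[of i] by auto
      then show False
        using that window_wraps_around(1)[of j] by simp
    qed
    moreover have "K - \<alpha> < i" "K - \<alpha> < j"
      using False \<open>i \<le> K - \<alpha> \<longleftrightarrow> j \<le> K - \<alpha>\<close> by auto
    ultimately show ?thesis
      using i j same by (metis atLeastAtMost_iff linorder_neqE_nat)
  qed
qed

end

lemma uncached_by_prefix_iff:
  assumes "us_placement K \<alpha> F B M Z" and u: "u permutes {1..K}" and "i \<le> K"
  shows "(\<forall>j\<in>{1..i}. ((f, u ` W), b) \<notin> Z (u j)) \<longleftrightarrow> cachers Z K (f, u ` W) b \<inter> u ` (W \<inter> {1..i}) = {}"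
proof -
  have "((f, u ` W), b) \<in> Z (u j) \<longleftrightarrow> u j \<in> cachers Z K (f, u ` W) b" if "j \<in> {1..i}" for j
    using \<open>i \<le> K\<close> that permutes_in_image[OF u, of j] by (simp add: cachers_def)
  moreover have "u j \<in> cachers Z K (f, u ` W) b \<Longrightarrow> j \<in> W" for j
    using cachers_subset[OF assms(1), of "(f, u ` W)" b] inj_image_mem_iff[OF permutes_inj[OF u]] by auto
  ultimately show ?thesis
    by blast
qed

context windows
begin

lemma admissible_window_demand:
  assumes "f \<in> {1..F}" and "u permutes {1..K}"
  shows "admissible_demand K \<alpha> F (\<lambda>k. (f, u ` window K \<alpha> (inv u k)))"
  unfolding admissible_demand_def
proof
  fix k
  assume "k \<in> {1..K}"
  then have i: "inv u k \<in> {1..K}"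
    using permutes_in_image[OF permutes_inv[OF assms(2)]] by simp
  have "u ` window K \<alpha> (inv u k) \<subseteq> {1..K}"
    using window_subset[OF i] permutes_image[OF assms(2)] by blast
  moreover have "card (u ` window K \<alpha> (inv u k)) = \<alpha>"
    using card_window[OF i] permutes_inj[OF assms(2)] by (simp add: card_image inj_on_subset)
  moreover have "k \<in> u ` window K \<alpha> (inv u k)"
    using mem_window[OF i] permutes_inverses(1)[OF assms(2)] by (metis image_eqI)
  ultimately show "(f, u ` window K \<alpha> (inv u k)) \<in> lib K \<alpha> F \<and> k \<in> snd (f, u ` window K \<alpha> (inv u k))"
    using assms(1) by (simp add: lib_def)
qed

lemma permuted_window_load_bound:
  assumes placement: "us_placement K \<alpha> F B M Z" and delivers: "delivers K \<alpha> F B R Z enc dec"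
    and "f \<in> {1..F}" and u: "u permutes {1..K}"
  shows "(\<Sum>i=1..K. real (card {b. b < B \<and>
            cachers Z K (f, u ` window K \<alpha> i) b \<inter> u ` (window K \<alpha> i \<inter> {1..i}) = {}})) \<le> R * real B"
proof -
  define d where "d k = (f, u ` window K \<alpha> (inv u k))" for k
  have d_u: "d (u i) = (f, u ` window K \<alpha> i)" for i
    using permutes_inverses(2)[OF u] by (simp add: d_def)
  have "admissible_demand K \<alpha> F d"
    unfolding d_def using admissible_window_demand[OF \<open>f \<in> {1..F}\<close> u] .
  then have "\<forall>w. real (length (enc d w)) \<le> R * real B \<and>
      (\<forall>k\<in>{1..K}. \<forall>b<B. dec d k (enc d w) (cache_content Z k w) b = w (d k) b)"
    using delivers by (simp add: delivers_def)
  moreover have "u ` {1..K} \<subseteq> {1..K}"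
    using permutes_image[OF u] by simp
  moreover have "inj_on (d \<circ> u) {1..K}"
  proof (rule inj_onI)
    fix i j
    assume "i \<in> {1..K}" "j \<in> {1..K}" "(d \<circ> u) i = (d \<circ> u) j"
    then show "i = j"
      using inj_onD[OF inj_on_window] by (simp add: d_u inj_image_eq_iff[OF permutes_inj[OF u]])
  qed
  ultimately have bound: "(\<Sum>i=1..K. real (card {b. b < B \<and> (\<forall>j\<in>{1..i}. (d (u i), b) \<notin> Z (u j))})) \<le> R * real B"
    by (intro decoding_chain_bound[where E = "enc d" and dec = "dec d"]) auto
  have "(\<forall>j\<in>{1..i}. (d (u i), b) \<notin> Z (u j)) \<longleftrightarrow>
      cachers Z K (f, u ` window K \<alpha> i) b \<inter> u ` (window K \<alpha> i \<inter> {1..i}) = {}"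
    if "i \<in> {1..K}" for i b
    unfolding d_u using uncached_by_prefix_iff[OF placement u] that by simp
  then have "(\<Sum>i=1..K. real (card {b. b < B \<and> (\<forall>j\<in>{1..i}. (d (u i), b) \<notin> Z (u j))}))
      = (\<Sum>i=1..K. real (card {b. b < B \<and>
            cachers Z K (f, u ` window K \<alpha> i) b \<inter> u ` (window K \<alpha> i \<inter> {1..i}) = {}}))"
    by (intro sum.cong refl) simp
  with bound show ?thesis
    by simp
qed

end

definition miss_probability :: "nat \<Rightarrow> nat \<Rightarrow> nat \<Rightarrow> nat \<Rightarrow> real" where
  "miss_probability K \<alpha> i l = real ((\<alpha> - l) choose card (window K \<alpha> i \<inter> {1..i}))
                               / real (\<alpha> choose card (window K \<alpha> i \<inter> {1..i}))"

text \<open>For a bit cached by \<open>l\<close> of the \<open>\<alpha>\<close> users of its class, the number of positions \<open>i\<close> at which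
  none of the users \<open>u 1, \<dots>, u i\<close> caches it, averaged over all permutations \<open>u\<close>.\<close>
definition expected_misses :: "nat \<Rightarrow> nat \<Rightarrow> nat \<Rightarrow> real" where
  "expected_misses K \<alpha> l = (\<Sum>i=1..K. miss_probability K \<alpha> i l)"

lemma (in windows) sum_expected_misses_le:
  assumes placement: "us_placement K \<alpha> F B M Z" and delivers: "delivers K \<alpha> F B R Z enc dec"
    and "f \<in> {1..F}"
  shows "(\<Sum>S | S \<subseteq> {1..K} \<and> card S = \<alpha>. \<Sum>b<B. expected_misses K \<alpha> (card (cachers Z K (f, S) b)))
       \<le> real (K choose \<alpha>) * (R * real B)"
proof -
  define miss where "miss u i = real (card {b. b < B \<and>
      cachers Z K (f, u ` window K \<alpha> i) b \<inter> u ` (window K \<alpha> i \<inter> {1..i}) = {}})" for u i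
  define p where "p i = (\<Sum>S | S \<subseteq> {1..K} \<and> card S = \<alpha>. \<Sum>b<B.
      miss_probability K \<alpha> i (card (cachers Z K (f, S) b)))" for i
  have class_cachers: "cachers Z K (f, S) b \<subseteq> S" for S b
    using cachers_subset[OF placement, of "(f, S)" b] by simp
  have average: "real (K choose \<alpha>) * (\<Sum>u | u permutes {1..K}. miss u i) = fact K * p i"
    if "i \<in> {1..K}" for i
    using sum_permutes_avoiding[OF finite_atLeastAtMost Int_lower1 window_subset[OF that] class_cachers, of B]
      card_window[OF that] by (simp add: miss_def p_def miss_probability_def)
  have "(\<Sum>u | u permutes {1..K}. \<Sum>i=1..K. miss u i) \<le> (\<Sum>u | u permutes {1..K}. R * real B)"
    unfolding miss_def using permuted_window_load_bound[OF placement delivers \<open>f \<in> {1..F}\<close>]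
    by (intro sum_mono) simp
  then have total: "(\<Sum>i=1..K. \<Sum>u | u permutes {1..K}. miss u i) \<le> fact K * (R * real B)"
    by (subst sum.swap) (simp add: card_permutations)
  have "fact K * (\<Sum>S | S \<subseteq> {1..K} \<and> card S = \<alpha>. \<Sum>b<B. expected_misses K \<alpha> (card (cachers Z K (f, S) b)))
      = (\<Sum>i=1..K. fact K * p i)"
    unfolding expected_misses_def p_def sum_distrib_left[symmetric]
    by (simp only: sum.swap[where A = "{..<B}"]) (subst sum.swap, rule refl)
  also have "\<dots> = (\<Sum>i=1..K. real (K choose \<alpha>) * (\<Sum>u | u permutes {1..K}. miss u i))"
    by (rule sum.cong[OF refl], rule average[symmetric])
  also have "\<dots> = real (K choose \<alpha>) * (\<Sum>i=1..K. \<Sum>u | u permutes {1..K}. miss u i)"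
    by (rule sum_distrib_left[symmetric])
  also have "\<dots> \<le> real (K choose \<alpha>) * (fact K * (R * real B))"
    using total by (rule mult_left_mono) simp
  finally show ?thesis
    by simp
qed

lemma (in windows) sum_expected_misses_lib_le:
  assumes "us_placement K \<alpha> F B M Z" and "delivers K \<alpha> F B R Z enc dec"
  shows "(\<Sum>x\<in>lib K \<alpha> F \<times> {..<B}. expected_misses K \<alpha> (card (cachers Z K (fst x) (snd x))))
       \<le> real (card (lib K \<alpha> F \<times> {..<B})) * R"
proof -
  have "(\<Sum>x\<in>lib K \<alpha> F \<times> {..<B}. expected_misses K \<alpha> (card (cachers Z K (fst x) (snd x))))
      = (\<Sum>f=1..F. \<Sum>S | S \<subseteq> {1..K} \<and> card S = \<alpha>. \<Sum>b<B. expected_misses K \<alpha> (card (cachers Z K (f, S) b)))"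
    unfolding lib_eq_Times by (simp add: sum.cartesian_product')
  also have "\<dots> \<le> (\<Sum>f=1..F. real (K choose \<alpha>) * (R * real B))"
    using sum_expected_misses_le[OF assms] by (intro sum_mono) simp
  also have "\<dots> = real (card (lib K \<alpha> F \<times> {..<B})) * R"
    by (simp add: card_cartesian_product card_lib)
  finally show ?thesis .
qed

section \<open>The load lower bound\<close>

definition load_bound :: "nat \<Rightarrow> nat \<Rightarrow> real \<Rightarrow> real" where
  "load_bound K \<alpha> x = real (K - \<alpha>) * (real \<alpha> - x) / real \<alpha> + (real \<alpha> - x) / (x + 1)"

lemma (in windows) expected_misses_eq_load_bound:
  assumes "l \<le> \<alpha>"
  shows "expected_misses K \<alpha> l = load_bound K \<alpha> (real l)"
proof -
  define q where "q r = real ((\<alpha> - l) choose r) / real (\<alpha> choose r)" for r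
  have "{1..K} = {1..K - \<alpha>} \<union> {K - \<alpha> + 1..K}"
    using alpha_less by auto
  then have "expected_misses K \<alpha> l
      = (\<Sum>i=1..K - \<alpha>. q (card (window K \<alpha> i \<inter> {1..i}))) + (\<Sum>i=K - \<alpha> + 1..K. q (card (window K \<alpha> i \<inter> {1..i})))"
    unfolding expected_misses_def miss_probability_def q_def by (simp add: sum.union_disjoint)
  also have "\<dots> = (\<Sum>i=1..K - \<alpha>. q 1) + (\<Sum>i=K - \<alpha> + 1..K. q (i - (K - \<alpha>)))"
  proof -
    have "q (card (window K \<alpha> i \<inter> {1..i})) = q 1" if "i \<in> {1..K - \<alpha>}" for i
      using that card_window_prefix[of i] by (metis (no_types, lifting) atLeastAtMost_iff diff_le_self le_trans)
    moreover have "q (card (window K \<alpha> i \<inter> {1..i})) = q (i - (K - \<alpha>))" if "i \<in> {K - \<alpha> + 1..K}" for i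
      using that card_window_prefix[of i] by simp
    ultimately show ?thesis
      by (intro arg_cong2[where f = "(+)"] sum.cong refl) blast+
  qed
  also have "(\<Sum>i=K - \<alpha> + 1..K. q (i - (K - \<alpha>))) = (\<Sum>r=1..\<alpha>. q r)"
    using alpha_less sum.shift_bounds_cl_nat_ivl[of "\<lambda>i. q (i - (K - \<alpha>))" 1 "K - \<alpha>" \<alpha>] by simp
  also have "\<dots> = (real \<alpha> - real l) / (real l + 1)"
    unfolding q_def by (rule sum_choose_ratio[OF assms])
  finally show ?thesis
    using assms alpha_pos by (simp add: q_def load_bound_def of_nat_diff)
qed

lemma load_bound_tangent:
  assumes "0 \<le> x" and "0 \<le> t"
  shows "load_bound K \<alpha> t - (real (K - \<alpha>) / real \<alpha> + (real \<alpha> + 1) / (t + 1)\<^sup>2) * (x - t) \<le> load_bound K \<alpha> x"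
proof -
  define c where "c = real (K - \<alpha>) / real \<alpha>"
  have load_bound: "load_bound K \<alpha> y = c * (real \<alpha> - y) + (real \<alpha> - y) / (y + 1)" for y
    unfolding load_bound_def c_def by simp
  have "(real \<alpha> - t) / (t + 1) - (real \<alpha> + 1) / (t + 1)\<^sup>2 * (x - t) \<le> (real \<alpha> - x) / (x + 1)"
    using diff_div_ge_tangent[of "real \<alpha> + 1" "x + 1" "t + 1"] assms by simp
  moreover have "c * (real \<alpha> - x) = c * (real \<alpha> - t) - c * (x - t)"
    by (simp add: right_diff_distrib)
  ultimately show ?thesis
    unfolding load_bound c_def[symmetric] distrib_right by linarith
qed

lemma (in windows) load_bound_le_achievable:
  assumes "1 \<le> F" and "0 \<le> t" and "us_achievable K \<alpha> F (t * real (F * (K choose \<alpha>)) / real K) R"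
  shows "load_bound K \<alpha> t \<le> R"
proof -
  obtain B Z enc dec where "B > 0" and placement: "us_placement K \<alpha> F B (t * real (F * (K choose \<alpha>)) / real K) Z"
    and delivers: "delivers K \<alpha> F B R Z enc dec"
    using assms(3) unfolding us_achievable_iff_delivers by blast
  define I where "I = lib K \<alpha> F \<times> {..<B}"
  define L where "L x = card (cachers Z K (fst x) (snd x))" for x
  have "finite I" and card_I: "card I = F * (K choose \<alpha>) * B"
    unfolding I_def by (simp_all add: finite_lib card_cartesian_product card_lib)
  have "0 < real (card I)"
    using \<open>B > 0\<close> assms(1) alpha_less by (simp add: card_I)
  have "real K * (t * real (F * (K choose \<alpha>)) / real K) * real B = real (card I) * t"
    using alpha_less by (simp add: card_I)
  then have "(\<Sum>x\<in>I. real (L x)) \<le> real (card I) * t"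
    using sum_card_cachers_le[OF placement] unfolding I_def L_def by simp
  then have "real (card I) * load_bound K \<alpha> t \<le> (\<Sum>x\<in>I. load_bound K \<alpha> (real (L x)))"
    by (intro card_mult_le_sum_of_tangent[where s = "real (K - \<alpha>) / real \<alpha> + (real \<alpha> + 1) / (t + 1)\<^sup>2"]
        \<open>finite I\<close> load_bound_tangent \<open>0 \<le> t\<close>) simp_all
  also have "\<dots> = (\<Sum>x\<in>I. expected_misses K \<alpha> (L x))"
    using card_cachers_le[OF placement] expected_misses_eq_load_bound
    by (intro sum.cong refl) (auto simp: I_def L_def)
  also have "\<dots> \<le> real (card I) * R"
    unfolding I_def L_def by (rule sum_expected_misses_lib_le[OF placement delivers])
  finally show ?thesis
    using \<open>0 < real (card I)\<close> by simp
qed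

lemma (in windows) load_bound_le_Rstar_us:
  assumes "1 \<le> F" and "0 \<le> t"
  shows "load_bound K \<alpha> t \<le> Rstar_us K \<alpha> F (t * real (F * (K choose \<alpha>)) / real K)"
  unfolding Rstar_us_def
proof (rule cInf_greatest)
  show "{R. us_achievable K \<alpha> F (t * real (F * (K choose \<alpha>)) / real K) R} \<noteq> {}"
    using us_achievable_unicast[of "t * real (F * (K choose \<alpha>)) / real K" K \<alpha> F] assms(2) by auto
qed (use load_bound_le_achievable[OF assms] in blast)

lemma (in windows) load_bound_minus_R_MAN:
  "load_bound K \<alpha> (real t) - R_MAN K t = real (K - \<alpha>) * real t * (real \<alpha> - real t - 1) / (real \<alpha> * (real t + 1))"
proof -
  define k a x where "k = real (K - \<alpha>)" and "a = real \<alpha>" and "x = real t"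
  have "a > 0" "x + 1 > 0"
    using alpha_pos by (simp_all add: a_def x_def)
  have "load_bound K \<alpha> (real t) - R_MAN K t = k * (a - x) / a + ((a - x) / (x + 1) - (k + a - x) / (x + 1))"
    using alpha_less by (simp add: load_bound_def R_MAN_def k_def a_def x_def)
  also have "\<dots> = k * (a - x) / a - k / (x + 1)"
    by (simp add: diff_divide_distrib[symmetric])
  also have "\<dots> = (k * (a - x) * (x + 1) - k * a) / (a * (x + 1))"
    using \<open>a > 0\<close> \<open>x + 1 > 0\<close> by (simp add: field_simps)
  also have "k * (a - x) * (x + 1) - k * a = k * x * (a - x - 1)"
    by (simp add: algebra_simps)
  finally show ?thesis
    by (simp add: k_def a_def x_def)
qed

lemma (in windows) R_MAN_le_load_bound:
  assumes "t < \<alpha>"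
  shows "R_MAN K t \<le> load_bound K \<alpha> (real t)"
proof -
  have "0 \<le> load_bound K \<alpha> (real t) - R_MAN K t"
    unfolding load_bound_minus_R_MAN using assms by (simp add: less_imp_le_nat flip: of_nat_diff)
  then show ?thesis
    by simp
qed

lemma (in windows) R_MAN_less_load_bound:
  assumes "0 < t" and "t + 1 < \<alpha>"
  shows "R_MAN K t < load_bound K \<alpha> (real t)"
proof -
  have "0 < load_bound K \<alpha> (real t) - R_MAN K t"
    unfolding load_bound_minus_R_MAN using assms alpha_less by simp
  then show ?thesis
    by simp
qed

theorem corollary1:
  fixes K \<alpha> F N :: nat
  assumes "K \<ge> 3" and "2 \<le> \<alpha>" and "\<alpha> \<le> K - 1" and "F \<ge> 1"
    and "N = F * (K choose \<alpha>)" and "N \<ge> K"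
  shows "(\<forall>t\<in>{0..\<alpha>-1}. Rstar_us K \<alpha> F (real t * real N / real K) / R_MAN K t \<ge> 1)
       \<and> (\<forall>t\<in>{1..\<alpha>-2}. Rstar_us K \<alpha> F (real t * real N / real K) / R_MAN K t > 1)"
proof -
  interpret windows K \<alpha>
    using assms by unfold_locales auto
  have Rstar: "load_bound K \<alpha> (real t) \<le> Rstar_us K \<alpha> F (real t * real N / real K)" for t
    using load_bound_le_Rstar_us[OF assms(4), of "real t"] assms(5) by simp
  have R_MAN_pos: "t < \<alpha> \<Longrightarrow> 0 < R_MAN K t" for t
    using alpha_less unfolding R_MAN_def by simp
  show ?thesis
  proof (intro conjI ballI)
    fix t
    assume "t \<in> {0..\<alpha> - 1}"
    then have "t < \<alpha>"
      using alpha_pos by auto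
    then show "1 \<le> Rstar_us K \<alpha> F (real t * real N / real K) / R_MAN K t"
      using order_trans[OF R_MAN_le_load_bound Rstar] R_MAN_pos by (simp add: le_divide_eq_1_pos)
  next
    fix t
    assume "t \<in> {1..\<alpha> - 2}"
    then have "0 < t" "t + 1 < \<alpha>"
      by auto
    then show "1 < Rstar_us K \<alpha> F (real t * real N / real K) / R_MAN K t"
      using less_le_trans[OF R_MAN_less_load_bound Rstar] R_MAN_pos by (simp add: less_divide_eq_1_pos)
  qed
qed

end
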